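(* Let $G$ be a group and $H\le G$ a subnormal subgroup of finite index. If $q$ is a prime dividing $[G:H]$, then there exists $g\in G$ with $\mathrm{ord}_H(g)=q$.
   Context: $H$ is subnormal in $G$ if there is a chain $H=H_0\le H_1\le\dots\le H_m=G$ with each $H_j$ normal in $H_{j+1}$. For $g\in G$, the relative order is $\mathrm{ord}_H(g)=\min\{n>0\mid g^n\in H\}$. *)

theory Defs
  imports "HOL-Algebra.Algebra"
begin

definition subnormal :: "'a set \<Rightarrow> ('a, 'b) monoid_scheme \<Rightarrow> bool" where
  "subnormal H G \<longleftrightarrow>
     (\<exists>Hs :: 'a set list. Hs \<noteq> [] \<and> hd Hs = H \<and> last Hs = carrier G \<and>
        (\<forall>j. Suc j < length Hs \<longrightarrow>
             subgroup (Hs ! Suc j) G \<and>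
             normal (Hs ! j) (G\<lparr>carrier := Hs ! Suc j\<rparr>)))"

definition rel_ord :: "('a, 'b) monoid_scheme \<Rightarrow> 'a set \<Rightarrow> 'a \<Rightarrow> nat" where
  "rel_ord G H g = (LEAST n::nat. 0 < n \<and> g [^]\<^bsub>G\<^esub> n \<in> H)"

end

theory Submission
  imports Defs
begin

text \<open>Induct along the subnormal series \<open>H = H\<^sub>0 \<lhd> H\<^sub>1 \<lhd> \<dots> \<lhd> H\<^sub>m = G\<close>.
  Indices multiply, \<open>[K : H] = [K : H\<^sub>1] [H\<^sub>1 : H]\<close>, so the prime \<open>q\<close> divides one factor.
  If \<open>q\<close> divides \<open>[H\<^sub>1 : H]\<close>, Cauchy's theorem in the finite group \<open>H\<^sub>1 / H\<close> gives
  \<open>x \<notin> H\<close> with \<open>x\<^sup>q \<in> H\<close>. Otherwise induction gives \<open>g \<notin> H\<^sub>1\<close> with \<open>g\<^sup>q \<in> H\<^sub>1\<close>;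
  as \<open>H\<^sub>1 / H\<close> is finite some power of \<open>g\<close> lies in \<open>H\<close>, so \<open>ord\<^sub>H g = q s\<close> is a
  multiple of \<open>ord\<^sub>H\<^sub>1 g = q\<close>, and \<open>g\<^sup>s\<close> is an element outside \<open>H\<close> whose \<open>q\<close>-th power
  lies in \<open>H\<close>. For prime \<open>q\<close> such an element has relative order exactly \<open>q\<close>.\<close>

lemma (in subgroup) subgroup_nat_pow_closed:
  assumes "x \<in> H" shows "x [^]\<^bsub>G\<^esub> (n::nat) \<in> H"
  by (induction n) (simp_all add: assms)

lemma rel_ord_LeastI:
  fixes n :: nat
  assumes "0 < n" "g [^]\<^bsub>G\<^esub> n \<in> H"
  shows "0 < rel_ord G H g \<and> g [^]\<^bsub>G\<^esub> rel_ord G H g \<in> H"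
  unfolding rel_ord_def by (rule LeastI[of _ n]) (use assms in simp)

lemma rel_ord_Least_le:
  fixes n :: nat
  assumes "0 < n" "g [^]\<^bsub>G\<^esub> n \<in> H"
  shows "rel_ord G H g \<le> n"
  unfolding rel_ord_def by (rule Least_le) (use assms in simp)

lemma (in group) pow_mem_iff_rel_ord_dvd:
  fixes N n :: nat
  assumes "subgroup H G" "g \<in> carrier G" "0 < N" "g [^] N \<in> H"
  shows "g [^] n \<in> H \<longleftrightarrow> rel_ord G H g dvd n"
proof -
  interpret H: subgroup H G by fact
  define e where "e = rel_ord G H g"
  have e_pos: "0 < e" and e_mem: "g [^] e \<in> H"
    using rel_ord_LeastI[OF assms(3,4)] unfolding e_def by auto
  have mult_mem: "g [^] (e * k) \<in> H" for k
    using H.subgroup_nat_pow_closed[OF e_mem] assms(2) by (simp add: nat_pow_pow)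
  show ?thesis
    unfolding e_def[symmetric]
  proof
    assume n_mem: "g [^] n \<in> H"
    have "g [^] n = g [^] (e * (n div e)) \<otimes> g [^] (n mod e)"
      using assms(2) by (simp add: nat_pow_mult)
    hence "g [^] (n mod e) = inv (g [^] (e * (n div e))) \<otimes> g [^] n"
      using assms(2) by (simp add: inv_solve_left)
    hence rem_mem: "g [^] (n mod e) \<in> H"
      using mult_mem n_mem by simp
    have "n mod e = 0"
    proof (rule ccontr)
      assume "n mod e \<noteq> 0"
      hence "e \<le> n mod e" using rel_ord_Least_le[OF _ rem_mem] unfolding e_def by simp
      thus False using mod_less_divisor[OF e_pos, of n] by linarith
    qed
    thus "e dvd n" by (simp add: mod_eq_0_iff_dvd)
  next
    assume "e dvd n"
    thus "g [^] n \<in> H" using mult_mem by blast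
  qed
qed

lemma (in group) rel_ord_eq_prime:
  fixes q :: nat
  assumes "subgroup H G" "g \<in> carrier G" "Factorial_Ring.prime q" "g [^] q \<in> H" "g \<notin> H"
  shows "rel_ord G H g = q"
proof -
  have iff: "g [^] n \<in> H \<longleftrightarrow> rel_ord G H g dvd n" for n
    using pow_mem_iff_rel_ord_dvd[OF assms(1,2) prime_gt_0_nat[OF assms(3)] assms(4)] .
  have "rel_ord G H g dvd q" using iff assms(4) by blast
  moreover have "rel_ord G H g \<noteq> 1" using iff[of 1] assms(2,5) by auto
  ultimately show ?thesis using assms(3) by (auto simp: prime_nat_iff)
qed

lemma (in group) prime_root_descend:
  fixes q N :: nat
  assumes "subgroup H G" "subgroup H1 G" "H \<subseteq> H1" "g \<in> carrier G" "Factorial_Ring.prime q"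
    and "g [^] q \<in> H1" "g \<notin> H1" "0 < N" "g [^] N \<in> H"
  shows "\<exists>m::nat. (g [^] m) [^] q \<in> H \<and> g [^] m \<notin> H"
proof -
  define d where "d = rel_ord G H g"
  have d_pos: "0 < d" and d_mem: "g [^] d \<in> H"
    using rel_ord_LeastI[OF assms(8,9)] unfolding d_def by auto
  have "rel_ord G H1 g = q" by (rule rel_ord_eq_prime[OF assms(2,4-7)])
  hence "q dvd d"
    using pow_mem_iff_rel_ord_dvd[OF assms(2,4) prime_gt_0_nat[OF assms(5)] assms(6)] d_mem assms(3)
    by blast
  then obtain s where s: "d = q * s" by blast
  have s_pos: "0 < s" using s d_pos by simp
  have "(g [^] s) [^] q \<in> H" using d_mem s assms(4) by (simp add: nat_pow_pow mult.commute)
  moreover have "g [^] s \<notin> H"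
  proof
    assume "g [^] s \<in> H"
    hence "d \<le> s" unfolding d_def by (rule rel_ord_Least_le[OF s_pos])
    thus False using s s_pos prime_gt_1_nat[OF assms(5)] by simp
  qed
  ultimately show ?thesis by blast
qed

lemma (in group) cauchy_theorem:
  fixes p :: nat
  assumes "finite (carrier G)" "Factorial_Ring.prime p" "p dvd order G"
  shows "\<exists>x\<in>carrier G. ord x = p"
proof -
  define a where "a = multiplicity p (order G)"
  have "order G \<noteq> 0" using assms(1) order_gt_0_iff_finite by auto
  hence a_pos: "0 < a"
    using assms(2,3) prime_multiplicity_gt_zero_iff[OF prime_imp_prime_elem] unfolding a_def by blast
  obtain m where "order G = p ^ a * m" using multiplicity_dvd unfolding a_def by blast
  then obtain P where P: "subgroup P G" "card P = p ^ a"
    using sylow_thm[OF assms(2) is_group _ assms(1)] by blast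
  have "1 < card P" using P(2) one_less_power[OF prime_gt_1_nat[OF assms(2)] a_pos] by simp
  hence "\<not> P \<subseteq> {\<one>}" using card_mono[of "{\<one>}" P] by auto
  then obtain x where x: "x \<in> P" "x \<noteq> \<one>" by blast
  have x_carrier: "x \<in> carrier G" using x(1) subgroup.mem_carrier[OF P(1)] by blast
  have "x [^] (p ^ a) = \<one>"
    using group.pow_order_eq_1[OF subgroup_imp_group[OF P(1)], of x] x(1) P(2)
    by (simp add: order_def flip: nat_pow_consistent)
  hence "ord x dvd p ^ a" using pow_eq_id x_carrier by blast
  then obtain i where i: "ord x = p ^ i" using divides_primepow_nat[OF assms(2)] by blast
  moreover have "i \<noteq> 0" using i x ord_eq_1[OF x_carrier] by auto
  ultimately obtain j where "ord x = p ^ j * p" by (metis not0_implies_Suc power_Suc2)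
  hence "ord (x [^] (p ^ j)) = p"
    using ord_pow[OF x_carrier, of "p ^ j"] prime_gt_0_nat[OF assms(2)] by simp
  thus ?thesis using x_carrier by blast
qed

lemma (in group) rcosets_carrier_self: "rcosets (carrier G) = {carrier G}"
  unfolding RCOSETS_def using coset_join2[OF _ subgroup_self] by auto

lemma (in normal) finite_index_pow_mem:
  assumes "finite (rcosets H)" "x \<in> carrier G"
  shows "\<exists>N::nat. 0 < N \<and> x [^] N \<in> H"
proof -
  interpret Q: group "G Mod H" by (rule factorgroup_is_group)
  have x_coset: "H #> x \<in> carrier (G Mod H)" using assms(2) by (simp add: carrier_FactGroup)
  have "0 < order (G Mod H)" using assms(1) Q.order_gt_0_iff_finite by (simp add: FactGroup_def)
  moreover have "H #> x [^] order (G Mod H) = H"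
    using Q.pow_order_eq_1[OF x_coset] FactGroup_pow[OF assms(2)] by simp
  hence "x [^] order (G Mod H) \<in> H" using coset_join1 assms(2) subgroup_axioms by blast
  ultimately show ?thesis by blast
qed

lemma (in normal) exists_prime_root_outside:
  fixes q :: nat
  assumes "finite (rcosets H)" "Factorial_Ring.prime q" "q dvd card (rcosets H)"
  shows "\<exists>x\<in>carrier G. x [^] q \<in> H \<and> x \<notin> H"
proof -
  interpret Q: group "G Mod H" by (rule factorgroup_is_group)
  obtain C where C: "C \<in> carrier (G Mod H)" "Q.ord C = q"
    using Q.cauchy_theorem assms by (auto simp: order_def FactGroup_def)
  then obtain x where x: "x \<in> carrier G" "C = H #> x" by (auto simp: carrier_FactGroup)
  have "H #> x [^] q = H" using Q.pow_ord_eq_1[OF C(1)] C(2) FactGroup_pow[OF x(1)] x(2) by simp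
  hence "x [^] q \<in> H" using coset_join1 x(1) subgroup_axioms by blast
  moreover have "x \<notin> H"
  proof
    assume "x \<in> H"
    hence "C = \<one>\<^bsub>G Mod H\<^esub>" using x coset_join2 subgroup_axioms by simp
    thus False using C(2) Q.ord_id prime_gt_1_nat[OF assms(2)] by simp
  qed
  ultimately show ?thesis using x(1) by blast
qed

lemma (in group) set_mult_rcos_of_subgroup:
  assumes "subgroup H G" "subgroup K G" "H \<subseteq> K" "x \<in> carrier G"
  shows "K <#> (H #> x) = K #> x"
  using assms by (simp add: setmult_rcos_assoc subgroup.subset set_mult_subgroup_idem subgroup_incl)

lemma (in group) rcosets_fibre_set_mult:
  assumes "subgroup H G" "subgroup K G" "H \<subseteq> K" "y \<in> carrier G"
  shows "{C \<in> rcosets H. K <#> C = K #> y} = (\<lambda>D. D #> y) ` (rcosets\<^bsub>G\<lparr>carrier := K\<rparr>\<^esub> H)"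
proof -
  have H_carrier: "H \<subseteq> carrier G" and K_carrier: "K \<subseteq> carrier G"
    using assms(1,2) subgroup.subset by auto
  have rcosets_in_K: "rcosets\<^bsub>G\<lparr>carrier := K\<rparr>\<^esub> H = (\<lambda>k. H #> k) ` K"
    unfolding RCOSETS_def r_coset_def by auto
  show ?thesis
  proof (intro equalityI subsetI)
    fix C assume "C \<in> {C \<in> rcosets H. K <#> C = K #> y}"
    then obtain x where x: "x \<in> carrier G" "C = H #> x" "K #> x = K #> y"
      using set_mult_rcos_of_subgroup[OF assms(1-3)] unfolding RCOSETS_def by auto
    have "x \<otimes> inv y \<in> K"
      using subgroup.rcos_module_imp[OF assms(2) is_group assms(4)]
        repr_independenceD[OF assms(2) x(1) x(3)[symmetric]] by blast
    moreover have "C = (H #> (x \<otimes> inv y)) #> y"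
      using x(1,2) assms(4) H_carrier by (simp add: coset_mult_assoc m_assoc)
    ultimately show "C \<in> (\<lambda>D. D #> y) ` (rcosets\<^bsub>G\<lparr>carrier := K\<rparr>\<^esub> H)"
      unfolding rcosets_in_K by blast
  next
    fix C assume "C \<in> (\<lambda>D. D #> y) ` (rcosets\<^bsub>G\<lparr>carrier := K\<rparr>\<^esub> H)"
    then obtain k where k: "k \<in> K" "C = H #> k #> y" unfolding rcosets_in_K by blast
    have k_carrier: "k \<in> carrier G" using k(1) K_carrier by blast
    have "C = H #> (k \<otimes> y)" using k(2) k_carrier assms(4) H_carrier by (simp add: coset_mult_assoc)
    moreover have "K <#> (H #> (k \<otimes> y)) = K #> y"
      using set_mult_rcos_of_subgroup[OF assms(1-3)] coset_join2[OF k_carrier assms(2) k(1)]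
        coset_mult_assoc[OF K_carrier k_carrier assms(4)] k_carrier assms(4) by simp
    ultimately show "C \<in> {C \<in> rcosets H. K <#> C = K #> y}"
      using rcosetsI[OF H_carrier] k_carrier assms(4) by simp
  qed
qed

lemma (in group) index_mult:
  assumes "subgroup H G" "subgroup K G" "H \<subseteq> K" "finite (rcosets H)"
  shows "finite (rcosets K)" and "finite (rcosets\<^bsub>G\<lparr>carrier := K\<rparr>\<^esub> H)"
    and "card (rcosets H) = card (rcosets K) * card (rcosets\<^bsub>G\<lparr>carrier := K\<rparr>\<^esub> H)"
proof -
  let ?T = "rcosets\<^bsub>G\<lparr>carrier := K\<rparr>\<^esub> H"
  \<comment> \<open>Count the cosets of \<open>H\<close> along the fibres of \<open>C \<mapsto> K <#> C\<close>: each is a translate of \<open>?T\<close>.\<close>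
  define F where "F S = {C \<in> rcosets H. K <#> C = S}" for S
  have H_carrier: "H \<subseteq> carrier G" and K_carrier: "K \<subseteq> carrier G"
    using assms(1,2) subgroup.subset by auto
  have fibre: "F (K #> y) = (\<lambda>D. D #> y) ` ?T" if "y \<in> carrier G" for y
    unfolding F_def by (rule rcosets_fibre_set_mult[OF assms(1-3) that])
  have lift: "K #> y = K <#> (H #> y)" "H #> y \<in> rcosets H" if "y \<in> carrier G" for y
    using set_mult_rcos_of_subgroup[OF assms(1-3) that] rcosetsI[OF H_carrier that] by auto
  have proj: "K <#> C \<in> rcosets K" if "C \<in> rcosets H" for C
    using that lift(1) rcosetsI[OF K_carrier] unfolding RCOSETS_def by auto
  have cover: "rcosets H = (\<Union>S\<in>rcosets K. F S)"
    using proj unfolding F_def by blast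
  have "rcosets K \<subseteq> (\<lambda>C. K <#> C) ` (rcosets H)"
  proof
    fix S assume "S \<in> rcosets K"
    then obtain y where "y \<in> carrier G" "S = K #> y" unfolding RCOSETS_def by blast
    thus "S \<in> (\<lambda>C. K <#> C) ` (rcosets H)" using lift by blast
  qed
  thus fin_K: "finite (rcosets K)" using finite_surj[OF assms(4)] by blast
  have translate_inj: "inj_on (\<lambda>D. D #> y) ?T" if y: "y \<in> carrier G" for y
  proof (rule inj_on_inverseI)
    fix D assume "D \<in> ?T"
    hence "D \<subseteq> carrier G"
      using K_carrier r_coset_subset_G[OF H_carrier] unfolding RCOSETS_def r_coset_def by auto
    thus "D #> y #> inv y = D" using y by (simp add: coset_mult_assoc)
  qed
  have fin_F: "finite (F S)" for S using assms(4) unfolding F_def by simp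
  have "finite ((\<lambda>D. D #> \<one>) ` ?T)" unfolding fibre[OF one_closed, symmetric] by (rule fin_F)
  thus fin_T: "finite ?T" using finite_imageD translate_inj[OF one_closed] by blast
  have card_fibre: "card (F S) = card ?T" if "S \<in> rcosets K" for S
    using that fibre card_image[OF translate_inj] unfolding RCOSETS_def by auto
  have "F S \<inter> F S' = {}" if "S \<noteq> S'" for S S' using that unfolding F_def by blast
  hence "card (\<Union>S\<in>rcosets K. F S) = (\<Sum>S\<in>rcosets K. card (F S))"
    using fin_K fin_F by (simp add: card_UN_disjoint)
  hence "card (rcosets H) = (\<Sum>S\<in>rcosets K. card (F S))" unfolding cover[symmetric] .
  also have "\<dots> = card (rcosets K) * card ?T" using card_fibre by simp
  finally show "card (rcosets H) = card (rcosets K) * card ?T" .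
qed

text \<open>This is the list-free
  form of \<open>subnormal\<close>, built from \<open>H\<close> upwards so that rule induction peels off \<open>H \<lhd> H'\<close>.\<close>
inductive subnormal_in :: "('a, 'b) monoid_scheme \<Rightarrow> 'a set \<Rightarrow> 'a set \<Rightarrow> bool" for G where
  refl: "subgroup K G \<Longrightarrow> subnormal_in G K K"
| normal_step: "H \<lhd> G\<lparr>carrier := H'\<rparr> \<Longrightarrow> subnormal_in G H' K \<Longrightarrow> subnormal_in G H K"

lemma subnormal_in_subgroups:
  assumes "group G" "subnormal_in G H K"
  shows "subgroup H G \<and> subgroup K G \<and> H \<subseteq> K"
  using assms(2)
proof (induction rule: subnormal_in.induct)
  case (refl K)
  then show ?case by simp
next
  case (normal_step H H' K)
  have "subgroup H (G\<lparr>carrier := H'\<rparr>)" using normal_step.hyps(1) normal_imp_subgroup by blast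
  thus ?case using normal_step.IH group.incl_subgroup[OF assms(1)] subgroup.subset by fastforce
qed

lemma subnormal_imp_subnormal_in:
  assumes "group G" "subnormal H G"
  shows "subnormal_in G H (carrier G)"
proof -
  have "subnormal_in G (hd Hs) (last Hs)"
    if "Hs \<noteq> []" "subgroup (last Hs) G"
      "\<forall>j. Suc j < length Hs \<longrightarrow> subgroup (Hs ! Suc j) G \<and> Hs ! j \<lhd> G\<lparr>carrier := Hs ! Suc j\<rparr>"
    for Hs :: "'a set list"
    using that
  proof (induction Hs rule: list_nonempty_induct)
    case (single K)
    then show ?case by (simp add: subnormal_in.refl)
  next
    case (cons H Hs)
    have "H \<lhd> G\<lparr>carrier := hd Hs\<rparr>"
      using cons.prems(2)[rule_format, of 0] cons.hyps by (simp add: hd_conv_nth)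
    moreover have "subnormal_in G (hd Hs) (last Hs)"
    proof (rule cons.IH)
      show "subgroup (last Hs) G" using cons.hyps cons.prems(1) by simp
      show "\<forall>j. Suc j < length Hs \<longrightarrow> subgroup (Hs ! Suc j) G \<and> Hs ! j \<lhd> G\<lparr>carrier := Hs ! Suc j\<rparr>"
        using cons.prems(2) by (metis Suc_less_eq length_Cons nth_Cons_Suc)
    qed
    ultimately show ?case using cons.hyps by (simp add: subnormal_in.normal_step)
  qed
  thus ?thesis using assms group.subgroup_self unfolding subnormal_def by metis
qed

lemma subnormal_in_exists_prime_root_outside:
  fixes q :: nat
  assumes "group G" "Factorial_Ring.prime q" "subnormal_in G H K"
    and "finite (rcosets\<^bsub>G\<lparr>carrier := K\<rparr>\<^esub> H)" "q dvd card (rcosets\<^bsub>G\<lparr>carrier := K\<rparr>\<^esub> H)"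
  shows "\<exists>g\<in>K. g [^]\<^bsub>G\<^esub> q \<in> H \<and> g \<notin> H"
  using assms(3-5)
proof (induction rule: subnormal_in.induct)
  case (refl K)
  interpret K: group "G\<lparr>carrier := K\<rparr>" using group.subgroup_imp_group[OF assms(1) refl.hyps] .
  show ?case using refl.prems(2) K.rcosets_carrier_self prime_gt_1_nat[OF assms(2)] by simp
next
  case (normal_step H H' K)
  interpret G: group G by fact
  interpret H: normal H "G\<lparr>carrier := H'\<rparr>" by (rule normal_step.hyps(1))
  have H_in_H': "subgroup H (G\<lparr>carrier := H'\<rparr>)" by (rule H.subgroup_axioms)
  have sub: "subgroup H' G" "subgroup K G" "H' \<subseteq> K"
    using subnormal_in_subgroups[OF assms(1) normal_step.hyps(2)] by auto
  have sub_H: "subgroup H G" "H \<subseteq> H'"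
    using G.incl_subgroup[OF sub(1) H_in_H'] subgroup.subset[OF H_in_H'] by auto
  interpret K: group "G\<lparr>carrier := K\<rparr>" using G.subgroup_imp_group[OF sub(2)] .
  have "subgroup H (G\<lparr>carrier := K\<rparr>)" "subgroup H' (G\<lparr>carrier := K\<rparr>)"
    using G.subgroup_incl sub sub_H by auto
  note index = K.index_mult[OF this sub_H(2) normal_step.prems(1), simplified]
  have "q dvd card (rcosets\<^bsub>G\<lparr>carrier := K\<rparr>\<^esub> H') \<or> q dvd card (rcosets\<^bsub>G\<lparr>carrier := H'\<rparr>\<^esub> H)"
    using normal_step.prems(2) index(3) prime_dvd_mult_iff[OF assms(2)] by simp
  thus ?case
  proof
    assume "q dvd card (rcosets\<^bsub>G\<lparr>carrier := K\<rparr>\<^esub> H')"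
    then obtain g where g: "g \<in> K" "g [^]\<^bsub>G\<^esub> q \<in> H'" "g \<notin> H'"
      using normal_step.IH index(1) by blast
    obtain N :: nat where "0 < N" "(g [^]\<^bsub>G\<^esub> q) [^]\<^bsub>G\<^esub> N \<in> H"
      using H.finite_index_pow_mem[of "g [^]\<^bsub>G\<^esub> q"] index(2) g(2) by (auto simp flip: G.nat_pow_consistent)
    moreover have g_carrier: "g \<in> carrier G" using subgroup.mem_carrier[OF sub(2) g(1)] .
    ultimately have "0 < q * N" "g [^]\<^bsub>G\<^esub> (q * N) \<in> H"
      using prime_gt_0_nat[OF assms(2)] by (simp_all add: G.nat_pow_pow)
    then obtain m :: nat where "(g [^]\<^bsub>G\<^esub> m) [^]\<^bsub>G\<^esub> q \<in> H" "g [^]\<^bsub>G\<^esub> m \<notin> H"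
      using G.prime_root_descend[OF sub_H(1) sub(1) sub_H(2) g_carrier assms(2) g(2,3)] by blast
    moreover have "g [^]\<^bsub>G\<^esub> m \<in> K" using subgroup.subgroup_nat_pow_closed[OF sub(2) g(1)] .
    ultimately show ?case by blast
  next
    assume "q dvd card (rcosets\<^bsub>G\<lparr>carrier := H'\<rparr>\<^esub> H)"
    then obtain x where "x \<in> H'" "x [^]\<^bsub>G\<^esub> q \<in> H" "x \<notin> H"
      using H.exists_prime_root_outside[OF index(2) assms(2)] by (auto simp flip: G.nat_pow_consistent)
    thus ?case using sub(3) by blast
  qed
qed

theorem mainTheorem11:
  fixes G (structure) and H :: "'a set" and q :: nat
  assumes "group G"
    and "subgroup H G"
    and "subnormal H G"
    and "finite (rcosets\<^bsub>G\<^esub> H)"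
    and "Factorial_Ring.prime q"
    and "q dvd card (rcosets\<^bsub>G\<^esub> H)"
  shows "\<exists>g \<in> carrier G. rel_ord G H g = q"
proof -
  interpret group G by fact
  have "subnormal_in G H (carrier G)" using subnormal_imp_subnormal_in[OF assms(1,3)] .
  from subnormal_in_exists_prime_root_outside[OF assms(1,5) this] assms(4,6)
  obtain g where g: "g \<in> carrier G" "g [^] q \<in> H" "g \<notin> H" by auto
  thus ?thesis using rel_ord_eq_prime[OF assms(2) g(1) assms(5) g(2,3)] by blast
qed

end
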